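(* $\Sigma[3]=\bigcup_{n\ge0}(\mathcal S_n[3]\cup\mathcal S'_n[3])=\mathcal S[3]\cap V_{\mathcal R}=\Sigma\cap V$, where $V_{\mathcal R}=V\cap\mathcal R^4$ and $\mathcal S[3]$ is the unit sphere of $V$.
   Context: Let $\tau=(1+\sqrt5)/2$, $\tau'=(1-\sqrt5)/2$, $\mathcal R=\mathbb{Z}[\frac12,\tau]$. Let $\Delta\subset\mathbb{R}^4$ be the set of 120 vectors consisting of: the 8 vectors obtained from $(\pm1,0,0,0)$ by permuting coordinates; the 16 vectors $\frac12(\pm1,\pm1,\pm1,\pm1)$; and the 96 vectors obtained from $\frac12(0,\pm1,\pm\tau',\pm\tau)$ (all sign choices) by even permutations of the coordinates; $\Delta'$ is its image under $\tau\leftrightarrow\tau'$ in each coordinate. For a unit vector $a$, $r_a(x)=x-2(x\cdot a)a$; $H^\infty$ is generated by $r_a$, $a\in\Delta\cup\Delta'$, and $\Sigma=H^\infty(\Delta\cup\Delta')$. Let $V=\{x\in\mathbb{R}^4:x_1=0\}$, $\Delta[3]=\Delta\cap V$, $\Delta[3]'=\Delta'\cap V$, $H^\infty[3]$ the group of orthogonal maps of $V$ generated by the reflections $r_a$, $a\in\Delta[3]\cup\Delta[3]'$, and $\Sigma[3]=H^\infty[3](\Delta[3]\cup\Delta[3]')$. Identify $V$ with $\mathbb{R}^3$ via the last three coordinates. Let $\mathbb F_4=\mathbb{Z}[\tau]/2\mathbb{Z}[\tau]$ with coordinatewise reduction $y\mapsto\bar y$. For $n\ge1$, $\mathcal S_n[3]=\{x\in2^{-n}\mathbb{Z}[\tau]^3: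 x\cdot x=1,\ \overline{2^nx}\in\{(\bar1,\bar{\tau'},\bar\tau),(\bar{\tau'},\bar\tau,\bar1),(\bar\tau,\bar1,\bar{\tau'})\}\}$, $\mathcal S'_n[3]$ the same with $\bar\tau,\bar{\tau'}$ interchanged, and $\mathcal S_0[3]=\mathcal S'_0[3]=\{(\pm1,0,0),(0,\pm1,0),(0,0,\pm1)\}$. *)

theory Defs
  imports "HOL-Analysis.Analysis"
begin

definition tau :: real where "tau = (1 + sqrt 5) / 2"
definition tau' :: real where "tau' = (1 - sqrt 5) / 2"

definition Ztau :: "real set" where
  "Ztau = {of_int a + of_int b * tau | a b. True}"
definition Rring :: "real set" where
  "Rring = {y / 2 ^ n | y n. y \<in> Ztau}"

text \<open>Congruence modulo 2 Z[tau] (equality of reductions in F_4 = Z[tau]/2Z[tau]).\<close>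
definition cong2 :: "real \<Rightarrow> real \<Rightarrow> bool" where
  "cong2 y z \<longleftrightarrow> y \<in> Ztau \<and> z \<in> Ztau \<and> (y - z) / 2 \<in> Ztau"

definition refl :: "'a::real_inner \<Rightarrow> 'a \<Rightarrow> 'a" where
  "refl a x = x - (2 * (x \<bullet> a)) *\<^sub>R a"

inductive_set refl_group :: "'a::real_inner set \<Rightarrow> ('a \<Rightarrow> 'a) set" for A where
  idI: "id \<in> refl_group A"
| genI: "a \<in> A \<Longrightarrow> refl a \<in> refl_group A"
| compI: "g \<in> refl_group A \<Longrightarrow> h \<in> refl_group A \<Longrightarrow> g \<circ> h \<in> refl_group A"
| invI: "h \<in> refl_group A \<Longrightarrow> inv h \<in> refl_group A"

definition refl_orbit :: "'a::real_inner set \<Rightarrow> 'a set" where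
  "refl_orbit A = {h a | h a. h \<in> refl_group A \<and> a \<in> A}"

definition perm_vec :: "(4 \<Rightarrow> 4) \<Rightarrow> real^4 \<Rightarrow> real^4" where
  "perm_vec p w = (\<chi> i. w $ p i)"

definition Delta_gen :: "real \<Rightarrow> real \<Rightarrow> (real^4) set" where
  "Delta_gen t t' =
     {s *\<^sub>R axis i 1 | s i. s \<in> {-1, 1}}
   \<union> {vector [a/2, b/2, c/2, d/2] | a b c d. a \<in> {-1,1} \<and> b \<in> {-1,1} \<and> c \<in> {-1,1} \<and> d \<in> {-1,1}}
   \<union> {perm_vec p (vector [0, b/2, c * t' / 2, d * t / 2]) | p b c d.
        p permutes (UNIV :: 4 set) \<and> evenperm p \<and> b \<in> {-1,1} \<and> c \<in> {-1,1} \<and> d \<in> {-1,1}}"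

definition Delta :: "(real^4) set" where "Delta = Delta_gen tau tau'"
definition Delta' :: "(real^4) set" where "Delta' = Delta_gen tau' tau"

definition Sigma4 :: "(real^4) set" where "Sigma4 = refl_orbit (Delta \<union> Delta')"

text \<open>Identification of R^3 with V = {x. x_1 = 0} via the last three coordinates.\<close>
definition embV :: "real^3 \<Rightarrow> real^4" where
  "embV y = vector [0, y $ 1, y $ 2, y $ 3]"

definition Delta3 :: "(real^3) set" where "Delta3 = {y. embV y \<in> Delta}"
definition Delta3' :: "(real^3) set" where "Delta3' = {y. embV y \<in> Delta'}"

definition Sigma3 :: "(real^3) set" where "Sigma3 = refl_orbit (Delta3 \<union> Delta3')"

definition S0 :: "(real^3) set" where
  "S0 = {s *\<^sub>R axis i 1 | s i. s \<in> {-1, 1}}"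

definition Sn_gen :: "real \<Rightarrow> real \<Rightarrow> nat \<Rightarrow> (real^3) set" where
  "Sn_gen t t' n = (if n = 0 then S0 else
     {x. (\<forall>i. 2 ^ n * x $ i \<in> Ztau) \<and> x \<bullet> x = 1 \<and>
         (\<exists>(a, b, c) \<in> {(1, t', t), (t', t, 1), (t, 1, t')}.
            cong2 (2 ^ n * x $ 1) a \<and> cong2 (2 ^ n * x $ 2) b \<and> cong2 (2 ^ n * x $ 3) c)})"

definition Sn :: "nat \<Rightarrow> (real^3) set" where "Sn = Sn_gen tau tau'"
definition Sn' :: "nat \<Rightarrow> (real^3) set" where "Sn' = Sn_gen tau' tau"

end

theory Submission
  imports Defs
begin

text \<open>All roots are unit vectors with coordinates in \<open>R\<close>, and reflections in them preserve this
  property, so \<open>\<Sigma>[3]\<close>, \<open>\<Sigma> \<inter> V\<close> and every \<open>S\<^sub>n[3]\<close>, \<open>S'\<^sub>n[3]\<close> lie in \<open>S[3] \<inter> V\<^sub>R\<close>. Conversely let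
  \<open>x\<close> be a unit vector with \<open>y = 2\<^sup>n x \<in> \<int>[\<tau>]\<^sup>3\<close> and \<open>n\<close> minimal. Reading \<open>y \<bullet> y = 4\<^sup>n\<close> modulo \<open>4\<close> in
  \<open>\<int>[\<tau>] = \<int> \<oplus> \<int>\<tau>\<close> shows that for \<open>n > 0\<close> the coordinates of \<open>y\<close> reduce modulo \<open>2\<close> to an arrangement
  of \<open>1, \<tau>, \<tau>'\<close>, i.e. \<open>x \<in> S\<^sub>n[3] \<union> S'\<^sub>n[3]\<close>; for \<open>n = 0\<close> only \<open>\<plusminus>e\<^sub>i\<close> remain. In the first case the
  reflection in a root \<open>(\<plusminus>\<alpha>\<^sub>1, \<plusminus>\<alpha>\<^sub>2, \<plusminus>\<alpha>\<^sub>3)/2\<close> built from that arrangement, with suitable signs, lowers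
  \<open>n\<close>; descending to \<open>\<plusminus>e\<^sub>i \<in> \<Delta>[3]\<close> shows \<open>x \<in> \<Sigma>[3]\<close>, and \<open>\<Sigma>[3] \<subseteq> \<Sigma>\<close> via the embedding of \<open>V\<close>.\<close>

section \<open>The ring \<open>\<int>[\<tau>]\<close>\<close>

definition ztau :: "int \<Rightarrow> int \<Rightarrow> real" where
  "ztau a b = of_int a + of_int b * tau"

lemma tau_squared: "tau * tau = tau + 1"
  unfolding tau_def by (simp add: field_simps)

lemma tau'_eq_1_minus_tau: "tau' = 1 - tau"
  unfolding tau_def tau'_def by (simp add: field_simps)

lemma tau_squares_sum: "tau * tau + tau' * tau' = 3" "tau' * tau' + tau * tau = 3"
  by (simp_all add: tau'_eq_1_minus_tau tau_squared algebra_simps)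

lemma ztau_add: "ztau a b + ztau c d = ztau (a + c) (b + d)"
  and ztau_diff: "ztau a b - ztau c d = ztau (a - c) (b - d)"
  and ztau_minus: "- ztau a b = ztau (- a) (- b)"
  unfolding ztau_def by (simp_all add: algebra_simps)

lemma ztau_mult: "ztau a b * ztau c d = ztau (a * c + b * d) (a * d + b * c + b * d)"
proof -
  have "ztau a b * ztau c d = of_int (a * c) + of_int (a * d + b * c) * tau + of_int (b * d) * (tau * tau)"
    unfolding ztau_def by (simp add: algebra_simps)
  then show ?thesis
    unfolding tau_squared ztau_def by (simp add: algebra_simps)
qed

text \<open>The irrationality of \<open>\<tau>\<close>: after cancelling common factors \<open>2\<close>, one of \<open>a\<close>, \<open>b\<close> is odd and
  then \<open>a\<^sup>2 + a b - b\<^sup>2\<close> (minus the norm of \<open>a + b\<tau>\<close>) is odd.\<close>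
lemma norm_form_eq_0_imp:
  fixes a b :: int
  assumes "a\<^sup>2 + a * b - b\<^sup>2 = 0"
  shows "a = 0 \<and> b = 0"
  using assms
proof (induction "nat (\<bar>a\<bar> + \<bar>b\<bar>)" arbitrary: a b rule: less_induct)
  case less
  show ?case
  proof (cases "even a \<and> even b")
    case True
    then obtain a' b' where ab: "a = 2 * a'" "b = 2 * b'" by (auto elim!: evenE)
    with less.prems have "a'\<^sup>2 + a' * b' - b'\<^sup>2 = 0" by (simp add: power2_eq_square algebra_simps)
    moreover have "nat (\<bar>a'\<bar> + \<bar>b'\<bar>) < nat (\<bar>a\<bar> + \<bar>b\<bar>)" if "a \<noteq> 0 \<or> b \<noteq> 0"
      using that ab by auto
    ultimately show ?thesis using less.hyps ab by fastforce
  next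
    case False
    then have "odd (a\<^sup>2 + a * b - b\<^sup>2)" by (auto simp: power2_eq_square)
    with less.prems show ?thesis by simp
  qed
qed

lemma ztau_eq_0_iff: "ztau a b = 0 \<longleftrightarrow> a = 0 \<and> b = 0"
proof
  assume h: "ztau a b = 0"
  then have "of_int a = - of_int b * tau" unfolding ztau_def by (simp add: algebra_simps)
  then have "(of_int a :: real) * of_int a = of_int b * of_int b * (tau * tau)" by (simp add: algebra_simps)
  also have "\<dots> = of_int b * (of_int b * tau) + of_int b * of_int b" by (simp add: tau_squared algebra_simps)
  also have "of_int b * tau = - (of_int a :: real)" using h unfolding ztau_def by (simp add: algebra_simps)
  finally have "real_of_int (a\<^sup>2 + a * b - b\<^sup>2) = 0" by (simp add: power2_eq_square algebra_simps)
  then show "a = 0 \<and> b = 0" by (intro norm_form_eq_0_imp) linarith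
qed (simp add: ztau_def)

lemma ztau_eq_iff: "ztau a b = ztau c d \<longleftrightarrow> a = c \<and> b = d"
  using ztau_eq_0_iff[of "a - c" "b - d"] by (auto simp: ztau_diff[symmetric])

lemma Ztau_iff: "y \<in> Ztau \<longleftrightarrow> (\<exists>a b. y = ztau a b)"
  unfolding Ztau_def ztau_def by auto

lemma ztau_in_Ztau [simp]: "ztau a b \<in> Ztau"
  by (auto simp: Ztau_iff)

lemma ztau_of_int: "of_int k = ztau k 0"
  and ztau_tau: "tau = ztau 0 1"
  and ztau_tau': "tau' = ztau 1 (- 1)"
  by (simp_all add: ztau_def tau'_eq_1_minus_tau)

lemma Ztau_add [intro]: "y \<in> Ztau \<Longrightarrow> z \<in> Ztau \<Longrightarrow> y + z \<in> Ztau"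
  and Ztau_diff [intro]: "y \<in> Ztau \<Longrightarrow> z \<in> Ztau \<Longrightarrow> y - z \<in> Ztau"
  and Ztau_mult [intro]: "y \<in> Ztau \<Longrightarrow> z \<in> Ztau \<Longrightarrow> y * z \<in> Ztau"
  and Ztau_minus [intro]: "y \<in> Ztau \<Longrightarrow> - y \<in> Ztau"
  unfolding Ztau_iff by (metis ztau_add, metis ztau_diff, metis ztau_mult, metis ztau_minus)

lemma Ztau_of_int [simp]: "of_int k \<in> Ztau"
  and Ztau_tau [simp]: "tau \<in> Ztau"
  and Ztau_tau' [simp]: "tau' \<in> Ztau"
  by (simp_all only: ztau_of_int ztau_tau ztau_tau' ztau_in_Ztau)

lemma Ztau_numeral [simp]: "numeral k \<in> Ztau"
  and Ztau_0 [simp]: "0 \<in> Ztau"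
  and Ztau_1 [simp]: "1 \<in> Ztau"
  and Ztau_power2 [simp]: "2 ^ n \<in> Ztau"
  using Ztau_of_int[of "numeral k"] Ztau_of_int[of 0] Ztau_of_int[of 1] Ztau_of_int[of "2 ^ n"]
  by simp_all

lemma ztau_square: "ztau a b * ztau a b = ztau (a\<^sup>2 + b\<^sup>2) (2 * a * b + b\<^sup>2)"
  by (simp add: ztau_mult power2_eq_square algebra_simps)

lemma ztau_sum_squares:
  "ztau a1 b1 * ztau a1 b1 + ztau a2 b2 * ztau a2 b2 + ztau a3 b3 * ztau a3 b3
     = ztau (a1\<^sup>2 + b1\<^sup>2 + a2\<^sup>2 + b2\<^sup>2 + a3\<^sup>2 + b3\<^sup>2) (2*a1*b1 + b1\<^sup>2 + 2*a2*b2 + b2\<^sup>2 + 2*a3*b3 + b3\<^sup>2)"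
  by (simp add: ztau_square ztau_add algebra_simps)

section \<open>Congruences modulo \<open>2\<close>\<close>

lemma cong2_refl: "y \<in> Ztau \<Longrightarrow> cong2 y y"
  and cong2_sym: "cong2 y z \<Longrightarrow> cong2 z y"
  and cong2_trans: "cong2 y z \<Longrightarrow> cong2 z u \<Longrightarrow> cong2 y u"
  and cong2_add: "cong2 y z \<Longrightarrow> cong2 y' z' \<Longrightarrow> cong2 (y + y') (z + z')"
  and cong2_diff: "cong2 y z \<Longrightarrow> cong2 y' z' \<Longrightarrow> cong2 (y - y') (z - z')"
  and cong2_mult_right: "cong2 y z \<Longrightarrow> u \<in> Ztau \<Longrightarrow> cong2 (y * u) (z * u)"
  and cong2_minus: "y \<in> Ztau \<Longrightarrow> cong2 (- y) y"
proof -
  show "cong2 y z \<Longrightarrow> cong2 z y"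
    using Ztau_minus[of "(y - z) / 2"] by (simp add: cong2_def minus_divide_left)
  show "cong2 y z \<Longrightarrow> cong2 z u \<Longrightarrow> cong2 y u"
    using Ztau_add[of "(y - z) / 2" "(z - u) / 2"] by (simp add: cong2_def diff_divide_distrib)
  have "(y + y' - (z + z')) / 2 = (y - z) / 2 + (y' - z') / 2" by (simp add: field_simps)
  then show "cong2 y z \<Longrightarrow> cong2 y' z' \<Longrightarrow> cong2 (y + y') (z + z')"
    unfolding cong2_def by (metis Ztau_add)
  have "(y - y' - (z - z')) / 2 = (y - z) / 2 - (y' - z') / 2" by (simp add: field_simps)
  then show "cong2 y z \<Longrightarrow> cong2 y' z' \<Longrightarrow> cong2 (y - y') (z - z')"
    unfolding cong2_def by (metis Ztau_diff)
  show "cong2 y z \<Longrightarrow> u \<in> Ztau \<Longrightarrow> cong2 (y * u) (z * u)"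
    using Ztau_mult[of "(y - z) / 2" u] by (auto simp: cong2_def left_diff_distrib)
qed (auto simp: cong2_def)

lemma cong2_0_iff: "cong2 y 0 \<longleftrightarrow> y \<in> Ztau \<and> y / 2 \<in> Ztau"
  by (simp add: cong2_def)

lemma half_ztau_in_Ztau_iff: "ztau a b / 2 \<in> Ztau \<longleftrightarrow> even a \<and> even b"
proof
  assume "ztau a b / 2 \<in> Ztau"
  then obtain e f where "ztau a b / 2 = ztau e f" by (auto simp: Ztau_iff)
  then have "ztau a b = ztau (2 * e) (2 * f)" by (simp add: ztau_def field_simps)
  then show "even a \<and> even b" by (simp add: ztau_eq_iff)
next
  assume "even a \<and> even b"
  then obtain e f where "a = 2 * e" "b = 2 * f" by (auto elim!: evenE)
  then have "ztau a b / 2 = ztau e f" by (simp add: ztau_def field_simps)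
  then show "ztau a b / 2 \<in> Ztau" by simp
qed

lemma cong2_ztau_iff: "cong2 (ztau a b) (ztau c d) \<longleftrightarrow> even (a - c) \<and> even (b - d)"
  by (simp add: cong2_def ztau_diff half_ztau_in_Ztau_iff)

lemma cong2_ztau_1 [simp]: "cong2 (ztau a b) 1 \<longleftrightarrow> odd a \<and> even b"
  and cong2_ztau_tau [simp]: "cong2 (ztau a b) tau \<longleftrightarrow> even a \<and> odd b"
  and cong2_ztau_tau' [simp]: "cong2 (ztau a b) tau' \<longleftrightarrow> odd a \<and> odd b"
  using cong2_ztau_iff[of a b 1 0] cong2_ztau_iff[of a b 0 1] cong2_ztau_iff[of a b 1 "-1"]
  by (simp_all add: ztau_of_int[of 1, simplified] ztau_tau ztau_tau')

lemma cong2_1_after_subtracting_square: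
  assumes "w \<in> Ztau"
  shows "cong2 w 1 \<or> (\<exists>\<beta> \<in> {1, tau, tau'}. cong2 (w - \<beta> * \<beta>) 1)"
proof -
  obtain a b where w: "w = ztau a b"
    using assms by (auto simp: Ztau_iff)
  have shifts: "ztau (a - 1) b = w - 1 * 1" "ztau (a - 1) (b - 1) = w - tau * tau"
    "ztau (a - 2) (b + 1) = w - tau' * tau'"
    unfolding w by (simp_all add: ztau_def tau_squared tau'_eq_1_minus_tau algebra_simps)
  have "cong2 (ztau a b) 1 \<or> cong2 (ztau (a - 1) b) 1 \<or> cong2 (ztau (a - 1) (b - 1)) 1
      \<or> cong2 (ztau (a - 2) (b + 1)) 1"
    by simp presburger
  then show ?thesis
    unfolding shifts w[symmetric] by blast
qed

lemma half_diff_in_Ztau: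
  assumes "cong2 y \<alpha>" "cong2 w 1" "e \<in> {-1, 1}" "\<alpha> \<in> Ztau"
  shows "(y - w * (e * \<alpha>)) / 2 \<in> Ztau"
proof -
  have "e * \<alpha> \<in> Ztau" "cong2 (e * \<alpha>) \<alpha>"
    using assms(3,4) cong2_refl cong2_minus by auto
  then have "cong2 (w * (e * \<alpha>)) \<alpha>"
    using cong2_trans[OF cong2_mult_right[OF assms(2)]] by simp
  then have "cong2 y (w * (e * \<alpha>))"
    using assms(1) cong2_sym cong2_trans by blast
  then show ?thesis
    by (simp add: cong2_def)
qed

section \<open>Sums of three squares in \<open>\<int>[\<tau>]\<close>\<close>

lemma square_mod_4: "4 dvd a\<^sup>2 - a mod 2" for a :: int
proof (cases "even a")
  case True
  then obtain k where "a = 2 * k" by (auto elim: evenE)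
  then show ?thesis by (simp add: power2_eq_square)
next
  case False
  then obtain k where "a = 2 * k + 1" by (auto elim: oddE)
  then have "a\<^sup>2 - a mod 2 = 4 * (k\<^sup>2 + k)" by (simp add: power2_eq_square algebra_simps)
  then show ?thesis by simp
qed

lemma double_product_mod_4: "4 dvd 2 * a * b - 2 * (a mod 2) * (b mod 2)" for a b :: int
proof -
  define p q where "p = a mod 2" and "q = b mod 2"
  obtain A B where a: "a = 2 * A + p" and b: "b = 2 * B + q"
    unfolding p_def q_def by (metis div_mult_mod_eq mult.commute)
  have "2 * a * b - 2 * p * q = 4 * (2 * A * B + A * q + p * B)"
    unfolding a b by (simp add: algebra_simps)
  then show ?thesis
    by (simp add: p_def q_def)
qed

text \<open>The residue triples in the definition of \<open>S\<^sub>n[3]\<close> (\<open>t = \<tau>\<close>) and \<open>S'\<^sub>n[3]\<close> (\<open>t = \<tau>'\<close>); together they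
  are the six arrangements of the nonzero residues \<open>1, \<tau>, \<tau>'\<close> of \<open>\<int>[\<tau>]/2\<int>[\<tau>] = \<bbbF>\<^sub>4\<close>.\<close>
definition cyclic :: "real \<Rightarrow> real \<Rightarrow> (real \<times> real \<times> real) set" where
  "cyclic t t' = {(1, t', t), (t', t, 1), (t, 1, t')}"

lemma parity_pattern:
  fixes p1 q1 p2 q2 p3 q3 :: int
  assumes "p1 \<in> {0,1}" "q1 \<in> {0,1}" "p2 \<in> {0,1}" "q2 \<in> {0,1}" "p3 \<in> {0,1}" "q3 \<in> {0,1}"
    and "4 dvd p1 + q1 + p2 + q2 + p3 + q3"
    and "4 dvd 2*p1*q1 + q1 + 2*p2*q2 + q2 + 2*p3*q3 + q3"
    and "p1 \<noteq> 0 \<or> q1 \<noteq> 0 \<or> p2 \<noteq> 0 \<or> q2 \<noteq> 0 \<or> p3 \<noteq> 0 \<or> q3 \<noteq> 0"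
  shows "((p1,q1),(p2,q2),(p3,q3)) \<in> {((1,0),(1,1),(0,1)), ((1,1),(0,1),(1,0)), ((0,1),(1,0),(1,1)),
      ((1,0),(0,1),(1,1)), ((0,1),(1,1),(1,0)), ((1,1),(1,0),(0,1))}"
  using assms by (simp only: insert_iff singleton_iff empty_iff simp_thms) (elim disjE; simp)

text \<open>With \<open>y\<^sub>i = a\<^sub>i + b\<^sub>i\<tau>\<close>, the rational and \<open>\<tau>\<close>-parts of \<open>\<Sum> y\<^sub>i\<^sup>2\<close> are, modulo \<open>4\<close>, functions of the
  parities of the \<open>a\<^sub>i, b\<^sub>i\<close> alone; this reduces the claim to the finite check \<open>parity_pattern\<close>.\<close>
lemma ztau_sum_squares_pattern:
  fixes a1 b1 a2 b2 a3 b3 :: int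
  assumes rational: "4 dvd a1\<^sup>2 + b1\<^sup>2 + a2\<^sup>2 + b2\<^sup>2 + a3\<^sup>2 + b3\<^sup>2"
    and irrational: "4 dvd 2*a1*b1 + b1\<^sup>2 + 2*a2*b2 + b2\<^sup>2 + 2*a3*b3 + b3\<^sup>2"
    and primitive: "\<not> (even a1 \<and> even b1 \<and> even a2 \<and> even b2 \<and> even a3 \<and> even b3)"
  shows "\<exists>(\<alpha>1, \<alpha>2, \<alpha>3) \<in> cyclic tau tau' \<union> cyclic tau' tau.
           cong2 (ztau a1 b1) \<alpha>1 \<and> cong2 (ztau a2 b2) \<alpha>2 \<and> cong2 (ztau a3 b3) \<alpha>3"
proof -
  have mod_2: "k mod 2 \<in> {0, 1}" for k :: int
    by (simp add: mod2_eq_if)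
  have P: "4 dvd a1 mod 2 + b1 mod 2 + a2 mod 2 + b2 mod 2 + a3 mod 2 + b3 mod 2"
  proof -
    have "(a1\<^sup>2 + b1\<^sup>2 + a2\<^sup>2 + b2\<^sup>2 + a3\<^sup>2 + b3\<^sup>2)
        - (a1 mod 2 + b1 mod 2 + a2 mod 2 + b2 mod 2 + a3 mod 2 + b3 mod 2)
        = (a1\<^sup>2 - a1 mod 2) + (b1\<^sup>2 - b1 mod 2) + (a2\<^sup>2 - a2 mod 2)
        + (b2\<^sup>2 - b2 mod 2) + (a3\<^sup>2 - a3 mod 2) + (b3\<^sup>2 - b3 mod 2)"
      by simp
    also have "4 dvd \<dots>"
      by (intro dvd_add square_mod_4)
    finally show ?thesis
      using dvd_diff_right_iff[OF rational] by blast
  qed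
  have Q: "4 dvd 2*(a1 mod 2)*(b1 mod 2) + b1 mod 2 + 2*(a2 mod 2)*(b2 mod 2) + b2 mod 2
      + 2*(a3 mod 2)*(b3 mod 2) + b3 mod 2"
  proof -
    have "(2*a1*b1 + b1\<^sup>2 + 2*a2*b2 + b2\<^sup>2 + 2*a3*b3 + b3\<^sup>2)
        - (2*(a1 mod 2)*(b1 mod 2) + b1 mod 2 + 2*(a2 mod 2)*(b2 mod 2) + b2 mod 2
          + 2*(a3 mod 2)*(b3 mod 2) + b3 mod 2)
        = (2*a1*b1 - 2*(a1 mod 2)*(b1 mod 2)) + (b1\<^sup>2 - b1 mod 2)
        + (2*a2*b2 - 2*(a2 mod 2)*(b2 mod 2)) + (b2\<^sup>2 - b2 mod 2)
        + (2*a3*b3 - 2*(a3 mod 2)*(b3 mod 2)) + (b3\<^sup>2 - b3 mod 2)"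
      by simp
    also have "4 dvd \<dots>"
      by (intro dvd_add square_mod_4 double_product_mod_4)
    finally show ?thesis
      using dvd_diff_right_iff[OF irrational] by blast
  qed
  have nonzero: "a1 mod 2 \<noteq> 0 \<or> b1 mod 2 \<noteq> 0 \<or> a2 mod 2 \<noteq> 0 \<or> b2 mod 2 \<noteq> 0
      \<or> a3 mod 2 \<noteq> 0 \<or> b3 mod 2 \<noteq> 0"
    using primitive by (simp add: even_iff_mod_2_eq_zero)
  from parity_pattern[OF mod_2 mod_2 mod_2 mod_2 mod_2 mod_2 P Q nonzero] show ?thesis
    unfolding cyclic_def bex_Un by (elim insertE emptyE) (simp_all add: even_iff_mod_2_eq_zero)
qed

lemma primitive_sum_squares_pattern:
  assumes "y1 \<in> Ztau" "y2 \<in> Ztau" "y3 \<in> Ztau"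
    and sum: "y1 * y1 + y2 * y2 + y3 * y3 = 4 ^ Suc m"
    and primitive: "\<not> (y1 / 2 \<in> Ztau \<and> y2 / 2 \<in> Ztau \<and> y3 / 2 \<in> Ztau)"
  shows "\<exists>(\<alpha>1, \<alpha>2, \<alpha>3) \<in> cyclic tau tau' \<union> cyclic tau' tau.
           cong2 y1 \<alpha>1 \<and> cong2 y2 \<alpha>2 \<and> cong2 y3 \<alpha>3"
proof -
  obtain a1 b1 a2 b2 a3 b3 where y: "y1 = ztau a1 b1" "y2 = ztau a2 b2" "y3 = ztau a3 b3"
    using assms(1-3) by (auto simp: Ztau_iff)
  have "ztau (a1\<^sup>2 + b1\<^sup>2 + a2\<^sup>2 + b2\<^sup>2 + a3\<^sup>2 + b3\<^sup>2) (2*a1*b1 + b1\<^sup>2 + 2*a2*b2 + b2\<^sup>2 + 2*a3*b3 + b3\<^sup>2)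
      = ztau (4 * 4 ^ m) 0"
    using sum unfolding y ztau_sum_squares by (simp add: ztau_def)
  then have "4 dvd a1\<^sup>2 + b1\<^sup>2 + a2\<^sup>2 + b2\<^sup>2 + a3\<^sup>2 + b3\<^sup>2"
    and "4 dvd 2*a1*b1 + b1\<^sup>2 + 2*a2*b2 + b2\<^sup>2 + 2*a3*b3 + b3\<^sup>2"
    by (simp_all add: ztau_eq_iff)
  moreover have "\<not> (even a1 \<and> even b1 \<and> even a2 \<and> even b2 \<and> even a3 \<and> even b3)"
    using primitive unfolding y half_ztau_in_Ztau_iff by blast
  ultimately show ?thesis
    unfolding y by (rule ztau_sum_squares_pattern)
qed

lemma cyclic_pattern_facts:
  assumes "(\<alpha>1, \<alpha>2, \<alpha>3) \<in> cyclic tau tau' \<union> cyclic tau' tau"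
  shows "\<alpha>1 \<in> Ztau" "\<alpha>2 \<in> Ztau" "\<alpha>3 \<in> Ztau"
    and "\<alpha>1 * \<alpha>1 + \<alpha>2 * \<alpha>2 + \<alpha>3 * \<alpha>3 = 4"
    and "{1, tau, tau'} = {\<alpha>1, \<alpha>2, \<alpha>3}"
  using assms tau_squares_sum unfolding cyclic_def by (auto simp: algebra_simps)

lemma half_pairing_in_Ztau:
  assumes \<alpha>: "(\<alpha>1, \<alpha>2, \<alpha>3) \<in> cyclic tau tau' \<union> cyclic tau' tau"
    and cong: "cong2 y1 \<alpha>1" "cong2 y2 \<alpha>2" "cong2 y3 \<alpha>3"
  shows "(y1 * \<alpha>1 + y2 * \<alpha>2 + y3 * \<alpha>3) / 2 \<in> Ztau"
proof -
  note \<alpha>_facts = cyclic_pattern_facts[OF \<alpha>]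
  have "cong2 (y1 * \<alpha>1 + y2 * \<alpha>2 + y3 * \<alpha>3) 4"
    unfolding \<alpha>_facts(4)[symmetric] using cong \<alpha>_facts(1-3) by (intro cong2_add cong2_mult_right)
  moreover have "cong2 4 0"
    by (simp add: cong2_def)
  ultimately show ?thesis
    using cong2_trans cong2_0_iff by blast
qed

text \<open>Flipping the sign \<open>e\<^sub>j\<close> changes the half-sum by \<open>y\<^sub>j \<alpha>\<^sub>j \<equiv> \<alpha>\<^sub>j\<^sup>2\<close>, and the squares of \<open>1, \<tau>, \<tau>'\<close> are again \<open>1, \<tau>', \<tau>\<close> modulo \<open>2\<close>, so some
  choice of signs reaches the residue \<open>1\<close>.\<close>
lemma signed_half_pairing_cong2_1:
  assumes \<alpha>: "(\<alpha>1, \<alpha>2, \<alpha>3) \<in> cyclic tau tau' \<union> cyclic tau' tau"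
    and cong: "cong2 y1 \<alpha>1" "cong2 y2 \<alpha>2" "cong2 y3 \<alpha>3"
  shows "\<exists>e1 e2 e3. e1 \<in> {-1, 1} \<and> e2 \<in> {-1, 1} \<and> e3 \<in> {-1, 1} \<and>
    cong2 ((e1 * y1 * \<alpha>1 + e2 * y2 * \<alpha>2 + e3 * y3 * \<alpha>3) / 2) 1"
proof -
  note \<alpha>_facts = cyclic_pattern_facts[OF \<alpha>]
  have products: "cong2 (y1 * \<alpha>1) (\<alpha>1 * \<alpha>1)" "cong2 (y2 * \<alpha>2) (\<alpha>2 * \<alpha>2)" "cong2 (y3 * \<alpha>3) (\<alpha>3 * \<alpha>3)"
    using cong \<alpha>_facts(1-3) by (simp_all add: cong2_mult_right)
  define s where "s = y1 * \<alpha>1 + y2 * \<alpha>2 + y3 * \<alpha>3"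
  have "s / 2 \<in> Ztau"
    unfolding s_def using half_pairing_in_Ztau[OF \<alpha> cong] .
  from cong2_1_after_subtracting_square[OF this] consider "cong2 (s / 2) 1"
    | \<beta> where "\<beta> \<in> {\<alpha>1, \<alpha>2, \<alpha>3}" "cong2 (s / 2 - \<beta> * \<beta>) 1"
    using \<alpha>_facts(5) by blast
  then show ?thesis
  proof cases
    case 1
    then have "cong2 ((1 * y1 * \<alpha>1 + 1 * y2 * \<alpha>2 + 1 * y3 * \<alpha>3) / 2) 1"
      by (simp add: s_def)
    then show ?thesis by blast
  next
    case 2
    have flip: "cong2 (s / 2 - y * \<beta>) 1" if "cong2 (y * \<beta>) (\<beta> * \<beta>)" for y
      using cong2_trans[OF cong2_diff[OF cong2_refl that] 2(2)] \<open>s / 2 \<in> Ztau\<close> by blast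
    from 2(1) consider "\<beta> = \<alpha>1" | "\<beta> = \<alpha>2" | "\<beta> = \<alpha>3" by blast
    then show ?thesis
    proof cases
      case 1
      have "(- 1 * y1 * \<alpha>1 + 1 * y2 * \<alpha>2 + 1 * y3 * \<alpha>3) / 2 = s / 2 - y1 * \<beta>"
        using 1 by (simp add: s_def field_simps)
      then show ?thesis
        using flip[of y1] products(1) 1 by (metis insertI1 insertI2)
    next
      case 2
      have "(1 * y1 * \<alpha>1 + - 1 * y2 * \<alpha>2 + 1 * y3 * \<alpha>3) / 2 = s / 2 - y2 * \<beta>"
        using 2 by (simp add: s_def field_simps)
      then show ?thesis
        using flip[of y2] products(2) 2 by (metis insertI1 insertI2)
    next
      case 3
      have "(1 * y1 * \<alpha>1 + 1 * y2 * \<alpha>2 + - 1 * y3 * \<alpha>3) / 2 = s / 2 - y3 * \<beta>"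
        using 3 by (simp add: s_def field_simps)
      then show ?thesis
        using flip[of y3] products(3) 3 by (metis insertI1 insertI2)
    qed
  qed
qed

lemma tau_part_vanishes:
  fixes a1 b1 a2 b2 a3 b3 :: int
  assumes "a1\<^sup>2 + b1\<^sup>2 + a2\<^sup>2 + b2\<^sup>2 + a3\<^sup>2 + b3\<^sup>2 = 1"
    and "2*a1*b1 + b1\<^sup>2 + 2*a2*b2 + b2\<^sup>2 + 2*a3*b3 + b3\<^sup>2 = 0"
  shows "b1 = 0"
proof (rule ccontr)
  assume "b1 \<noteq> 0"
  then have "1 \<le> b1\<^sup>2" by (simp add: int_one_le_iff_zero_less)
  then have "a1\<^sup>2 = 0 \<and> a2\<^sup>2 = 0 \<and> b2\<^sup>2 = 0 \<and> a3\<^sup>2 = 0 \<and> b3\<^sup>2 = 0"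
    using assms(1) by (smt (verit) zero_le_power2)
  with assms(2) \<open>1 \<le> b1\<^sup>2\<close> show False by simp
qed

lemma sum_three_squares_eq_1:
  fixes a1 a2 a3 :: int
  assumes "a1\<^sup>2 + a2\<^sup>2 + a3\<^sup>2 = 1"
  shows "(\<bar>a1\<bar> = 1 \<and> a2 = 0 \<and> a3 = 0) \<or> (a1 = 0 \<and> \<bar>a2\<bar> = 1 \<and> a3 = 0) \<or> (a1 = 0 \<and> a2 = 0 \<and> \<bar>a3\<bar> = 1)"
proof -
  have "a1\<^sup>2 \<le> 1" "a2\<^sup>2 \<le> 1" "a3\<^sup>2 \<le> 1"
    using assms by (smt (verit) zero_le_power2)+
  then have "a1 \<in> {-1, 0, 1}" "a2 \<in> {-1, 0, 1}" "a3 \<in> {-1, 0, 1}"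
    by (auto simp: abs_square_le_1 abs_le_iff)
  with assms show ?thesis by auto
qed

section \<open>The ring \<open>R\<close> and its unit sphere\<close>

lemma Rring_iff: "x \<in> Rring \<longleftrightarrow> (\<exists>n. 2 ^ n * x \<in> Ztau)"
proof
  assume "x \<in> Rring"
  then obtain y n where "y \<in> Ztau" "x = y / 2 ^ n" unfolding Rring_def by auto
  then show "\<exists>n. 2 ^ n * x \<in> Ztau" by (intro exI[of _ n]) simp
next
  assume "\<exists>n. 2 ^ n * x \<in> Ztau"
  then obtain n where "2 ^ n * x \<in> Ztau" by auto
  moreover have "x = (2 ^ n * x) / 2 ^ n" by simp
  ultimately show "x \<in> Rring" unfolding Rring_def by blast
qed

lemma Ztau_power2_mult_mono: "2 ^ m * x \<in> Ztau \<Longrightarrow> m \<le> n \<Longrightarrow> 2 ^ n * x \<in> Ztau"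
proof -
  assume x: "2 ^ m * x \<in> Ztau" and "m \<le> n"
  then obtain k where "n = m + k"
    using le_Suc_ex by blast
  then have "2 ^ n * x = 2 ^ k * (2 ^ m * x)"
    by (simp add: power_add)
  also have "\<dots> \<in> Ztau"
    by (rule Ztau_mult[OF Ztau_power2 x])
  finally show ?thesis .
qed

lemma Ztau_subset_Rring: "x \<in> Ztau \<Longrightarrow> x \<in> Rring"
  unfolding Rring_iff by (intro exI[of _ 0]) simp

lemma Rring_0 [simp]: "0 \<in> Rring"
  by (simp add: Ztau_subset_Rring)

lemma Rring_add: "x \<in> Rring \<Longrightarrow> y \<in> Rring \<Longrightarrow> x + y \<in> Rring"
proof -
  assume "x \<in> Rring" "y \<in> Rring"
  then obtain m n where "2 ^ m * x \<in> Ztau" "2 ^ n * y \<in> Ztau" by (auto simp: Rring_iff)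
  then have "2 ^ (m + n) * x \<in> Ztau" "2 ^ (m + n) * y \<in> Ztau"
    using Ztau_power2_mult_mono[of m x "m + n"] Ztau_power2_mult_mono[of n y "m + n"] by simp_all
  then have "2 ^ (m + n) * (x + y) \<in> Ztau" by (auto simp: distrib_left)
  then show ?thesis by (auto simp: Rring_iff)
qed

lemma Rring_mult: "x \<in> Rring \<Longrightarrow> y \<in> Rring \<Longrightarrow> x * y \<in> Rring"
proof -
  assume "x \<in> Rring" "y \<in> Rring"
  then obtain m n where "2 ^ m * x \<in> Ztau" "2 ^ n * y \<in> Ztau" by (auto simp: Rring_iff)
  then have "(2 ^ m * x) * (2 ^ n * y) \<in> Ztau" ..
  then have "2 ^ (m + n) * (x * y) \<in> Ztau"
    by (simp add: power_add algebra_simps)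
  then show ?thesis by (auto simp: Rring_iff)
qed

lemma Rring_minus: "x \<in> Rring \<Longrightarrow> - x \<in> Rring"
  unfolding Rring_iff by (metis Ztau_minus mult_minus_right)

lemma Rring_diff: "x \<in> Rring \<Longrightarrow> y \<in> Rring \<Longrightarrow> x - y \<in> Rring"
  using Rring_add[of x "- y"] Rring_minus[of y] by simp

lemma Rring_half: "x \<in> Rring \<Longrightarrow> x / 2 \<in> Rring"
proof -
  assume "x \<in> Rring"
  then obtain n where "2 ^ n * x \<in> Ztau" by (auto simp: Rring_iff)
  then have "2 ^ Suc n * (x / 2) \<in> Ztau" by simp
  then show ?thesis unfolding Rring_iff ..
qed

lemma Rring_sum: "(\<And>i. i \<in> S \<Longrightarrow> f i \<in> Rring) \<Longrightarrow> sum f S \<in> Rring"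
  by (induction S rule: infinite_finite_induct) (simp_all add: Ztau_subset_Rring Rring_add)

lemma inner_in_Rring:
  "(\<forall>i. x $ i \<in> Rring) \<Longrightarrow> (\<forall>i. y $ i \<in> Rring) \<Longrightarrow> (x :: real^'n) \<bullet> y \<in> Rring"
  unfolding inner_vec_def by (simp add: Rring_sum Rring_mult)

definition R_sphere :: "(real^'n) set" where
  "R_sphere = {x. x \<bullet> x = 1 \<and> (\<forall>i. x $ i \<in> Rring)}"

definition Ztau_dyadic :: "nat \<Rightarrow> (real^'n) set" where
  "Ztau_dyadic n = {x. \<forall>i. 2 ^ n * x $ i \<in> Ztau}"

lemma R_sphere_iff_Ztau_dyadic:
  "x \<in> R_sphere \<longleftrightarrow> x \<bullet> x = 1 \<and> (\<exists>n. x \<in> Ztau_dyadic n)"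
proof -
  have "(\<forall>i. x $ i \<in> Rring) \<longleftrightarrow> (\<exists>n. \<forall>i. 2 ^ n * x $ i \<in> Ztau)"
  proof
    assume "\<forall>i. x $ i \<in> Rring"
    then obtain N where N: "\<And>i. 2 ^ N i * x $ i \<in> Ztau"
      unfolding Rring_iff by metis
    have "2 ^ Max (range N) * x $ i \<in> Ztau" for i
      by (rule Ztau_power2_mult_mono[OF N]) simp
    then show "\<exists>n. \<forall>i. 2 ^ n * x $ i \<in> Ztau" by blast
  qed (auto simp: Rring_iff)
  then show ?thesis
    by (simp add: R_sphere_def Ztau_dyadic_def)
qed

lemma inner_vec3: "(x :: real^3) \<bullet> y = x$1 * y$1 + x$2 * y$2 + x$3 * y$3"
  by (simp add: inner_vec_def sum_3)

lemma S0_memI: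
  assumes "\<bar>x $ j\<bar> = 1" and "\<forall>i. i \<noteq> j \<longrightarrow> x $ i = 0"
  shows "x \<in> S0"
proof -
  have "x = x $ j *\<^sub>R axis j 1"
    using assms(2) by (auto simp: vec_eq_iff axis_def)
  moreover have "x $ j \<in> {-1, 1}"
    using assms(1) by (auto simp: abs_if split: if_splits)
  ultimately show ?thesis
    unfolding S0_def by blast
qed

lemma Ztau_unit_vector_in_S0:
  fixes x :: "real^3"
  assumes "x \<bullet> x = 1" and "\<forall>i. x $ i \<in> Ztau"
  shows "x \<in> S0"
proof -
  obtain a1 b1 a2 b2 a3 b3 where x: "x$1 = ztau a1 b1" "x$2 = ztau a2 b2" "x$3 = ztau a3 b3"
    using assms(2) by (meson Ztau_iff)
  have "ztau (a1\<^sup>2 + b1\<^sup>2 + a2\<^sup>2 + b2\<^sup>2 + a3\<^sup>2 + b3\<^sup>2) (2*a1*b1 + b1\<^sup>2 + 2*a2*b2 + b2\<^sup>2 + 2*a3*b3 + b3\<^sup>2)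
      = ztau 1 0"
    using assms(1) unfolding inner_vec3 x ztau_sum_squares by (simp add: ztau_def)
  then have sq: "a1\<^sup>2 + b1\<^sup>2 + a2\<^sup>2 + b2\<^sup>2 + a3\<^sup>2 + b3\<^sup>2 = 1"
    and tau: "2*a1*b1 + b1\<^sup>2 + 2*a2*b2 + b2\<^sup>2 + 2*a3*b3 + b3\<^sup>2 = 0"
    by (simp_all add: ztau_eq_iff)
  have "b1 = 0" "b2 = 0" "b3 = 0"
    using tau_part_vanishes[OF sq tau] tau_part_vanishes[of a2 b2 a1 b1 a3 b3]
      tau_part_vanishes[of a3 b3 a1 b1 a2 b2] sq tau by (simp_all add: algebra_simps)
  then have "x$1 = of_int a1" "x$2 = of_int a2" "x$3 = of_int a3" and "a1\<^sup>2 + a2\<^sup>2 + a3\<^sup>2 = 1"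
    using x sq by (simp_all add: ztau_def)
  with sum_three_squares_eq_1 consider "\<bar>x$1\<bar> = 1 \<and> x$2 = 0 \<and> x$3 = 0"
    | "x$1 = 0 \<and> \<bar>x$2\<bar> = 1 \<and> x$3 = 0" | "x$1 = 0 \<and> x$2 = 0 \<and> \<bar>x$3\<bar> = 1"
    by fastforce
  then show ?thesis
  proof cases
    case 1
    then show ?thesis by (intro S0_memI[of x 1]) (simp_all add: forall_3)
  next
    case 2
    then show ?thesis by (intro S0_memI[of x 2]) (simp_all add: forall_3)
  next
    case 3
    then show ?thesis by (intro S0_memI[of x 3]) (simp_all add: forall_3)
  qed
qed

lemma primitive_unit_vector_pattern:
  fixes x :: "real^3"
  assumes "x \<bullet> x = 1" and "x \<in> Ztau_dyadic (Suc m)" and "x \<notin> Ztau_dyadic m"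
  shows "\<exists>(\<alpha>1, \<alpha>2, \<alpha>3) \<in> cyclic tau tau' \<union> cyclic tau' tau.
    cong2 (2 ^ Suc m * x $ 1) \<alpha>1 \<and> cong2 (2 ^ Suc m * x $ 2) \<alpha>2 \<and> cong2 (2 ^ Suc m * x $ 3) \<alpha>3"
proof (rule primitive_sum_squares_pattern)
  show "2 ^ Suc m * x $ 1 \<in> Ztau" "2 ^ Suc m * x $ 2 \<in> Ztau" "2 ^ Suc m * x $ 3 \<in> Ztau"
    using assms(2) by (simp_all add: Ztau_dyadic_def)
  have "(2 ^ Suc m * x $ 1) * (2 ^ Suc m * x $ 1) + (2 ^ Suc m * x $ 2) * (2 ^ Suc m * x $ 2)
      + (2 ^ Suc m * x $ 3) * (2 ^ Suc m * x $ 3) = (2 ^ Suc m * 2 ^ Suc m) * (x \<bullet> x)"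
    by (simp add: inner_vec3 algebra_simps)
  then show "(2 ^ Suc m * x $ 1) * (2 ^ Suc m * x $ 1) + (2 ^ Suc m * x $ 2) * (2 ^ Suc m * x $ 2)
      + (2 ^ Suc m * x $ 3) * (2 ^ Suc m * x $ 3) = 4 ^ Suc m"
    using assms(1) by (simp add: power_mult_distrib[symmetric])
  show "\<not> (2 ^ Suc m * x $ 1 / 2 \<in> Ztau \<and> 2 ^ Suc m * x $ 2 / 2 \<in> Ztau \<and> 2 ^ Suc m * x $ 3 / 2 \<in> Ztau)"
    using assms(3) by (simp add: Ztau_dyadic_def forall_3)
qed

section \<open>Reflection groups\<close>

lemma refl_refl: "a \<bullet> a = 1 \<Longrightarrow> refl a (refl a x) = x"
  by (simp add: refl_def algebra_simps)

lemma inner_refl_refl: "a \<bullet> a = 1 \<Longrightarrow> refl a x \<bullet> refl a y = x \<bullet> y"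
  by (simp add: refl_def inner_commute algebra_simps)

lemma refl_in_R_sphere:
  assumes a: "a \<in> R_sphere" and x: "x \<in> R_sphere"
  shows "refl a x \<in> R_sphere"
proof -
  have "x \<bullet> a \<in> Rring"
    using a x inner_in_Rring unfolding R_sphere_def by blast
  then have "2 * (x \<bullet> a) \<in> Rring"
    by (rule Rring_mult[OF Ztau_subset_Rring[OF Ztau_numeral]])
  then have "\<forall>i. refl a x $ i \<in> Rring"
    using a x unfolding refl_def R_sphere_def by (simp add: Rring_diff Rring_mult)
  moreover have "refl a x \<bullet> refl a x = 1"
    using a x by (simp add: R_sphere_def inner_refl_refl)
  ultimately show ?thesis
    by (simp add: R_sphere_def)
qed

lemma refl_in_R_sphere_iff:
  assumes a: "a \<in> R_sphere"
  shows "refl a x \<in> R_sphere \<longleftrightarrow> x \<in> R_sphere"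
proof
  assume "refl a x \<in> R_sphere"
  then have "refl a (refl a x) \<in> R_sphere"
    by (rule refl_in_R_sphere[OF a])
  moreover have "a \<bullet> a = 1"
    using a by (simp add: R_sphere_def)
  ultimately show "x \<in> R_sphere"
    by (simp add: refl_refl)
qed (rule refl_in_R_sphere[OF a])

lemma bij_refl: "a \<bullet> a = 1 \<Longrightarrow> bij (refl a)"
  by (rule o_bij[of "refl a"]) (simp_all add: refl_refl fun_eq_iff)

lemma bij_refl_group: "h \<in> refl_group A \<Longrightarrow> \<forall>a \<in> A. a \<bullet> a = 1 \<Longrightarrow> bij h"
  by (induction rule: refl_group.induct) (simp_all add: bij_refl bij_comp bij_imp_bij_inv)

lemma refl_group_invariant:
  assumes "h \<in> refl_group A" and "\<forall>a \<in> A. a \<bullet> a = 1"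
    and "\<And>a x. a \<in> A \<Longrightarrow> refl a x \<in> S \<longleftrightarrow> x \<in> S"
  shows "h x \<in> S \<longleftrightarrow> x \<in> S"
  using assms(1)
proof (induction arbitrary: x)
  case idI
  show ?case by simp
next
  case (genI a)
  show ?case by (rule assms(3)[OF genI])
next
  case (compI g h)
  show ?case using compI.IH[of "h x"] compI.IH(2)[of x] by simp
next
  case (invI h)
  from invI.hyps assms(2) have "bij h"
    by (rule bij_refl_group)
  then have "h (inv h x) = x"
    by (simp add: bij_is_surj surj_f_inv_f)
  then show ?case
    using invI.IH[of "inv h x"] by simp
qed

lemma refl_orbit_subset:
  assumes "A \<subseteq> S" and "\<forall>a \<in> A. a \<bullet> a = 1"
    and "\<And>a x. a \<in> A \<Longrightarrow> refl a x \<in> S \<longleftrightarrow> x \<in> S"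
  shows "refl_orbit A \<subseteq> S"
  using refl_group_invariant[OF _ assms(2,3)] assms(1) unfolding refl_orbit_def by blast

lemma refl_orbit_subset_R_sphere:
  assumes "A \<subseteq> R_sphere"
  shows "refl_orbit A \<subseteq> R_sphere"
proof (rule refl_orbit_subset)
  show "\<forall>a \<in> A. a \<bullet> a = 1"
    using assms by (auto simp: R_sphere_def)
  show "refl a x \<in> R_sphere \<longleftrightarrow> x \<in> R_sphere" if "a \<in> A" for a x
    using refl_in_R_sphere_iff that assms by blast
qed (fact assms)

lemma mem_refl_orbit: "a \<in> A \<Longrightarrow> a \<in> refl_orbit A"
  unfolding refl_orbit_def by (auto intro!: exI[of _ id] refl_group.idI)

lemma refl_in_refl_orbit:
  assumes "a \<in> A" and "x \<in> refl_orbit A"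
  shows "refl a x \<in> refl_orbit A"
proof -
  obtain h b where "x = h b" "h \<in> refl_group A" "b \<in> A"
    using assms(2) unfolding refl_orbit_def by blast
  moreover have "refl a \<circ> h \<in> refl_group A"
    using assms(1) \<open>h \<in> refl_group A\<close> by (blast intro: refl_group.intros)
  ultimately show ?thesis
    unfolding refl_orbit_def by (auto intro!: exI[of _ "refl a \<circ> h"])
qed

lemma refl_linear_isometry:
  assumes "linear f" and "\<And>x y. f x \<bullet> f y = x \<bullet> y"
  shows "refl (f a) (f x) = f (refl a x)"
  by (simp add: refl_def assms linear_diff[OF assms(1)] linear_scale[OF assms(1)])

lemma refl_group_transfer:
  fixes f :: "'a::real_inner \<Rightarrow> 'b::real_inner"
  assumes f: "linear f" "\<And>x y. f x \<bullet> f y = x \<bullet> y" and "f ` A \<subseteq> B"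
    and units: "\<forall>a \<in> A. a \<bullet> a = 1" "\<forall>b \<in> B. b \<bullet> b = 1"
    and "h \<in> refl_group A"
  shows "\<exists>h' \<in> refl_group B. \<forall>x. h' (f x) = f (h x)"
  using \<open>h \<in> refl_group A\<close>
proof induction
  case idI
  show ?case by (auto intro!: bexI[of _ id] refl_group.idI)
next
  case (genI a)
  then have "f a \<in> B" using \<open>f ` A \<subseteq> B\<close> by blast
  then show ?case
    using refl_linear_isometry[OF f] by (auto intro: refl_group.genI)
next
  case (compI g h)
  then obtain g' h' where "g' \<in> refl_group B" "h' \<in> refl_group B"
    "\<forall>x. g' (f x) = f (g x)" "\<forall>x. h' (f x) = f (h x)" by blast
  then show ?case by (auto intro!: bexI[of _ "g' \<circ> h'"] refl_group.compI)
next
  case (invI h)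
  then obtain h' where h': "h' \<in> refl_group B" "\<forall>x. h' (f x) = f (h x)" by blast
  have "bij h" "bij h'"
    using bij_refl_group invI.hyps h'(1) units by blast+
  have "inv h' (f x) = inv h' (h' (f (inv h x)))" for x
    using h'(2) \<open>bij h\<close> by (simp add: bij_is_surj surj_f_inv_f)
  also have "\<dots> x = f (inv h x)" for x
    using \<open>bij h'\<close> by (simp add: bij_is_inj inv_f_f)
  finally show ?case
    using h'(1) by (auto intro!: bexI[of _ "inv h'"] refl_group.invI)
qed

lemma image_refl_orbit_subset:
  fixes f :: "'a::real_inner \<Rightarrow> 'b::real_inner"
  assumes "linear f" "\<And>x y. f x \<bullet> f y = x \<bullet> y" "f ` A \<subseteq> B"
    and "\<forall>a \<in> A. a \<bullet> a = 1" "\<forall>b \<in> B. b \<bullet> b = 1"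
  shows "f ` refl_orbit A \<subseteq> refl_orbit B"
proof
  fix y assume "y \<in> f ` refl_orbit A"
  then obtain h a where "y = f (h a)" "h \<in> refl_group A" "a \<in> A"
    unfolding refl_orbit_def by blast
  moreover obtain h' where "h' \<in> refl_group B" "\<forall>x. h' (f x) = f (h x)"
    using refl_group_transfer[OF assms \<open>h \<in> refl_group A\<close>] by blast
  ultimately have "y = h' (f a)" "f a \<in> B"
    using assms(3) by auto
  with \<open>h' \<in> refl_group B\<close> show "y \<in> refl_orbit B"
    unfolding refl_orbit_def by blast
qed

section \<open>The roots \<open>\<Delta>\<close> and \<open>\<Delta>[3]\<close>\<close>

lemma vector_4 [simp]:
  "(vector [x, y, z, w] :: 'a::zero^4) $ 1 = x"
  "(vector [x, y, z, w] :: 'a::zero^4) $ 2 = y"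
  "(vector [x, y, z, w] :: 'a::zero^4) $ 3 = z"
  "(vector [x, y, z, w] :: 'a::zero^4) $ 4 = w"
  unfolding vector_def by simp_all

lemma embV_nth [simp]: "embV y $ 1 = 0" "embV y $ 2 = y $ 1" "embV y $ 3 = y $ 2" "embV y $ 4 = y $ 3"
  by (simp_all add: embV_def)

lemma linear_embV: "linear embV"
  by (rule linearI) (simp_all add: vec_eq_iff forall_4)

lemma inner_embV: "embV x \<bullet> embV y = x \<bullet> y"
  by (simp add: inner_vec_def sum_3 sum_4)

lemma embV_in_R_sphere_iff: "embV y \<in> R_sphere \<longleftrightarrow> y \<in> R_sphere"
  by (simp add: R_sphere_def forall_3 forall_4 inner_embV)

lemma inner_perm_vec: "p permutes UNIV \<Longrightarrow> perm_vec p x \<bullet> perm_vec p y = x \<bullet> y"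
  unfolding perm_vec_def inner_vec_def
  using sum.permute[of p UNIV "\<lambda>i. x $ i * y $ i"] by (simp add: o_def)

lemma sign_mult_self_Ztau: "s \<in> {-1, 1} \<Longrightarrow> s * s = 1 \<and> s \<in> Ztau"
  by auto

lemma Delta_gen_subset_R_sphere:
  assumes t: "t \<in> Ztau" "t' \<in> Ztau" and norm: "t * t + t' * t' = 3"
  shows "Delta_gen t t' \<subseteq> R_sphere"
proof
  have half_Rring: "y \<in> Ztau \<Longrightarrow> y / 2 \<in> Rring" for y
    by (rule Rring_half[OF Ztau_subset_Rring])
  fix v assume "v \<in> Delta_gen t t'"
  then consider (axis) s i where "v = s *\<^sub>R axis i 1" "s \<in> {-1, 1}"
    | (half) a b c d where "v = vector [a/2, b/2, c/2, d/2]"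
        "a \<in> {-1, 1}" "b \<in> {-1, 1}" "c \<in> {-1, 1}" "d \<in> {-1, 1}"
    | (perm) p b c d where "v = perm_vec p (vector [0, b/2, c * t' / 2, d * t / 2])"
        "p permutes UNIV" "b \<in> {-1, 1}" "c \<in> {-1, 1}" "d \<in> {-1, 1}"
    unfolding Delta_gen_def by blast
  then show "v \<in> R_sphere"
  proof cases
    case axis
    have "v \<bullet> v = 1"
      using axis sign_mult_self_Ztau[OF axis(2)] by (simp add: inner_axis_axis)
    moreover have "v $ j \<in> Rring" for j
      using axis sign_mult_self_Ztau[OF axis(2)] by (simp add: axis_def Ztau_subset_Rring)
    ultimately show ?thesis
      by (simp add: R_sphere_def)
  next
    case half
    then show ?thesis
      using sign_mult_self_Ztau[OF half(2)] sign_mult_self_Ztau[OF half(3)] sign_mult_self_Ztau[OF half(4)] sign_mult_self_Ztau[OF half(5)]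
      by (simp add: R_sphere_def inner_vec_def sum_4 forall_4 half_Rring field_simps)
  next
    case perm
    define w :: "real^4" where "w = vector [0, b/2, c * t' / 2, d * t / 2]"
    have "w \<bullet> w = (b * b + (c * c) * (t' * t') + (d * d) * (t * t)) / 4"
      by (simp add: w_def inner_vec_def sum_4 field_simps)
    also have "\<dots> = 1"
      using sign_mult_self_Ztau[OF perm(3)] sign_mult_self_Ztau[OF perm(4)] sign_mult_self_Ztau[OF perm(5)] norm by simp
    finally have "w \<in> R_sphere"
      using sign_mult_self_Ztau[OF perm(3)] sign_mult_self_Ztau[OF perm(4)] sign_mult_self_Ztau[OF perm(5)] t
      by (simp add: w_def R_sphere_def forall_4 half_Rring Ztau_mult)
    then show ?thesis
      using perm(1,2) by (simp add: R_sphere_def w_def[symmetric] inner_perm_vec) (simp add: perm_vec_def)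
  qed
qed

lemma Delta_subset_R_sphere: "Delta \<union> Delta' \<subseteq> R_sphere"
  unfolding Delta_def Delta'_def using Delta_gen_subset_R_sphere tau_squares_sum by simp

lemma Delta3_subset_R_sphere: "Delta3 \<union> Delta3' \<subseteq> R_sphere"
  using Delta_subset_R_sphere embV_in_R_sphere_iff unfolding Delta3_def Delta3'_def by blast

lemma Sigma4_subset_R_sphere: "Sigma4 \<subseteq> R_sphere"
  unfolding Sigma4_def by (rule refl_orbit_subset_R_sphere[OF Delta_subset_R_sphere])

lemma Sigma3_subset_R_sphere: "Sigma3 \<subseteq> R_sphere"
  unfolding Sigma3_def by (rule refl_orbit_subset_R_sphere[OF Delta3_subset_R_sphere])

lemma embV_Sigma3_subset_Sigma4: "embV ` Sigma3 \<subseteq> Sigma4"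
  unfolding Sigma3_def Sigma4_def
proof (rule image_refl_orbit_subset[OF linear_embV inner_embV])
  show "embV ` (Delta3 \<union> Delta3') \<subseteq> Delta \<union> Delta'"
    unfolding Delta3_def Delta3'_def by blast
  show "\<forall>a \<in> Delta3 \<union> Delta3'. a \<bullet> a = 1" "\<forall>b \<in> Delta \<union> Delta'. b \<bullet> b = 1"
    using Delta3_subset_R_sphere Delta_subset_R_sphere by (auto simp: R_sphere_def)
qed

lemma S0_subset_Delta3: "S0 \<subseteq> Delta3"
proof
  fix x assume "x \<in> S0"
  then obtain s and i :: 3 where x: "x = s *\<^sub>R axis i 1" "s \<in> {-1, 1}"
    unfolding S0_def by blast
  have "embV x = s *\<^sub>R axis 2 1 \<or> embV x = s *\<^sub>R axis 3 1 \<or> embV x = s *\<^sub>R axis 4 1"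
    using exhaust_3[of i] x(1) by (auto simp: vec_eq_iff forall_4 axis_def)
  then show "x \<in> Delta3"
    using x(2) unfolding Delta3_def Delta_def Delta_gen_def by blast
qed

lemma even_perm_in_Delta_gen:
  assumes "p permutes UNIV" "evenperm p" "b \<in> {-1, 1}" "c \<in> {-1, 1}" "d \<in> {-1, 1}"
  shows "perm_vec p (vector [0, b/2, c * t' / 2, d * t / 2]) \<in> Delta_gen t t'"
  using assms unfolding Delta_gen_def by blast

lemma cyclic_root_in_Delta_gen:
  assumes "(\<alpha>1, \<alpha>2, \<alpha>3) \<in> cyclic t t'" and e: "e1 \<in> {-1, 1}" "e2 \<in> {-1, 1}" "e3 \<in> {-1, 1}"
  shows "embV (vector [e1 * \<alpha>1 / 2, e2 * \<alpha>2 / 2, e3 * \<alpha>3 / 2]) \<in> Delta_gen t t'"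
proof -
  define p1 :: "4 \<Rightarrow> 4" where "p1 = Transposition.transpose 2 3 \<circ> Transposition.transpose 3 4"
  define p2 :: "4 \<Rightarrow> 4" where "p2 = Transposition.transpose 3 4 \<circ> Transposition.transpose 2 3"
  have perms: "p permutes UNIV" "evenperm p" if "p \<in> {id, p1, p2}" for p
    using that unfolding p1_def p2_def
    by (auto intro: permutes_compose permutes_swap_id
        simp: evenperm_comp permutation_swap_id evenperm_swap)
  from assms(1) consider "(\<alpha>1, \<alpha>2, \<alpha>3) = (1, t', t)" | "(\<alpha>1, \<alpha>2, \<alpha>3) = (t', t, 1)"
    | "(\<alpha>1, \<alpha>2, \<alpha>3) = (t, 1, t')"
    unfolding cyclic_def by blast
  then show ?thesis
  proof cases
    case 1
    then have "embV (vector [e1 * \<alpha>1 / 2, e2 * \<alpha>2 / 2, e3 * \<alpha>3 / 2])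
        = perm_vec id (vector [0, e1/2, e2 * t' / 2, e3 * t / 2])"
      by (simp add: vec_eq_iff forall_4 perm_vec_def)
    then show ?thesis using even_perm_in_Delta_gen[OF perms e] by simp
  next
    case 2
    then have "embV (vector [e1 * \<alpha>1 / 2, e2 * \<alpha>2 / 2, e3 * \<alpha>3 / 2])
        = perm_vec p1 (vector [0, e3/2, e1 * t' / 2, e2 * t / 2])"
      by (simp add: vec_eq_iff forall_4 perm_vec_def p1_def Transposition.transpose_def)
    then show ?thesis using even_perm_in_Delta_gen[OF perms e(3,1,2)] by simp
  next
    case 3
    then have "embV (vector [e1 * \<alpha>1 / 2, e2 * \<alpha>2 / 2, e3 * \<alpha>3 / 2])
        = perm_vec p2 (vector [0, e2/2, e3 * t' / 2, e1 * t / 2])"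
      by (simp add: vec_eq_iff forall_4 perm_vec_def p2_def Transposition.transpose_def)
    then show ?thesis using even_perm_in_Delta_gen[OF perms e(2,3,1)] by simp
  qed
qed

lemma cyclic_root_in_Delta3:
  assumes "(\<alpha>1, \<alpha>2, \<alpha>3) \<in> cyclic tau tau' \<union> cyclic tau' tau"
    and "e1 \<in> {-1, 1}" "e2 \<in> {-1, 1}" "e3 \<in> {-1, 1}"
  shows "vector [e1 * \<alpha>1 / 2, e2 * \<alpha>2 / 2, e3 * \<alpha>3 / 2] \<in> Delta3 \<union> Delta3'"
  using assms cyclic_root_in_Delta_gen[of \<alpha>1 \<alpha>2 \<alpha>3 tau tau'] cyclic_root_in_Delta_gen[of \<alpha>1 \<alpha>2 \<alpha>3 tau' tau]
  unfolding Delta3_def Delta3'_def Delta_def Delta'_def by blast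

section \<open>Descent\<close>

text \<open>For the root \<open>a = (e\<^sub>i \<alpha>\<^sub>i / 2)\<^sub>i\<close> and \<open>w = 2\<^sup>m\<^sup>+\<^sup>1 (x \<bullet> a)\<close>, the coordinates of \<open>2\<^sup>m r\<^sub>a x\<close> are
  \<open>(y\<^sub>i - w e\<^sub>i \<alpha>\<^sub>i)/2\<close>; they lie in \<open>\<int>[\<tau>]\<close> as soon as the signs make \<open>w \<equiv> 1\<close>.\<close>
lemma root_reflection_lowers_level:
  fixes x :: "real^3"
  assumes \<alpha>: "(\<alpha>1, \<alpha>2, \<alpha>3) \<in> cyclic tau tau' \<union> cyclic tau' tau"
    and cong: "cong2 (2 ^ Suc m * x $ 1) \<alpha>1" "cong2 (2 ^ Suc m * x $ 2) \<alpha>2" "cong2 (2 ^ Suc m * x $ 3) \<alpha>3"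
  shows "\<exists>a \<in> Delta3 \<union> Delta3'. refl a x \<in> Ztau_dyadic m"
proof -
  define y where "y i = 2 ^ Suc m * x $ i" for i
  from signed_half_pairing_cong2_1[OF \<alpha> cong[folded y_def]] obtain e1 e2 e3
    where e: "e1 \<in> {-1, 1}" "e2 \<in> {-1, 1}" "e3 \<in> {-1, 1}"
      and w: "cong2 ((e1 * y 1 * \<alpha>1 + e2 * y 2 * \<alpha>2 + e3 * y 3 * \<alpha>3) / 2) 1"
    by blast
  define a :: "real^3" where "a = vector [e1 * \<alpha>1 / 2, e2 * \<alpha>2 / 2, e3 * \<alpha>3 / 2]"
  define w where "w = (e1 * y 1 * \<alpha>1 + e2 * y 2 * \<alpha>2 + e3 * y 3 * \<alpha>3) / 2"
  have "2 ^ Suc m * (x \<bullet> a) = w"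
    by (simp add: inner_vec3 a_def w_def y_def field_simps)
  then have level: "2 ^ m * refl a x $ i = (y i - w * (2 * a $ i)) / 2" for i
    by (simp add: refl_def y_def field_simps)
  have root: "2 * a $ 1 = e1 * \<alpha>1" "2 * a $ 2 = e2 * \<alpha>2" "2 * a $ 3 = e3 * \<alpha>3"
    by (simp_all add: a_def)
  note \<alpha>_Ztau = cyclic_pattern_facts(1-3)[OF \<alpha>]
  have "2 ^ m * refl a x $ 1 \<in> Ztau" "2 ^ m * refl a x $ 2 \<in> Ztau" "2 ^ m * refl a x $ 3 \<in> Ztau"
    unfolding level root using w[folded w_def] cong[folded y_def] e \<alpha>_Ztau
    by (blast intro: half_diff_in_Ztau)+
  then have "refl a x \<in> Ztau_dyadic m"
    by (simp add: Ztau_dyadic_def forall_3)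
  moreover have "a \<in> Delta3 \<union> Delta3'"
    unfolding a_def by (rule cyclic_root_in_Delta3[OF \<alpha> e])
  ultimately show ?thesis by blast
qed

lemma unit_Ztau_dyadic_in_Sigma3:
  fixes x :: "real^3"
  assumes "x \<bullet> x = 1" and "x \<in> Ztau_dyadic n"
  shows "x \<in> Sigma3"
  using assms
proof (induction n arbitrary: x)
  case 0
  then have "x \<in> S0"
    by (intro Ztau_unit_vector_in_S0) (simp_all add: Ztau_dyadic_def)
  then show ?case
    using S0_subset_Delta3 unfolding Sigma3_def by (blast intro: mem_refl_orbit)
next
  case (Suc m)
  show ?case
  proof (cases "x \<in> Ztau_dyadic m")
    case False
    with Suc.prems obtain a where a: "a \<in> Delta3 \<union> Delta3'" "refl a x \<in> Ztau_dyadic m"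
      using primitive_unit_vector_pattern root_reflection_lowers_level by blast
    have "a \<bullet> a = 1"
      using a(1) Delta3_subset_R_sphere by (auto simp: R_sphere_def)
    then have "refl a x \<in> Sigma3"
      using Suc.IH[OF _ a(2)] Suc.prems(1) by (simp add: inner_refl_refl)
    then have "refl a (refl a x) \<in> Sigma3"
      using a(1) unfolding Sigma3_def by (rule refl_in_refl_orbit[rotated])
    then show ?thesis
      using \<open>a \<bullet> a = 1\<close> by (simp add: refl_refl)
  qed (use Suc in blast)
qed

lemma unit_Ztau_dyadic_in_Sn:
  fixes x :: "real^3"
  assumes "x \<bullet> x = 1" and "x \<in> Ztau_dyadic n"
  shows "x \<in> (\<Union>n. Sn n \<union> Sn' n)"
  using assms
proof (induction n)
  case 0
  then have "x \<in> Sn 0"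
    using Ztau_unit_vector_in_S0 by (simp add: Sn_def Sn_gen_def Ztau_dyadic_def)
  then show ?case by blast
next
  case (Suc m)
  show ?case
  proof (cases "x \<in> Ztau_dyadic m")
    case False
    with Suc.prems have "x \<in> Sn (Suc m) \<union> Sn' (Suc m)"
      using primitive_unit_vector_pattern[of x m]
      unfolding Sn_def Sn'_def Sn_gen_def cyclic_def Ztau_dyadic_def by auto
    then show ?thesis by blast
  qed (use Suc in blast)
qed

lemma Sn_gen_subset_R_sphere: "Sn_gen t t' n \<subseteq> R_sphere"
proof (cases "n = 0")
  case True
  then show ?thesis
    using S0_subset_Delta3 Delta3_subset_R_sphere by (auto simp: Sn_gen_def)
next
  case False
  then show ?thesis
    by (auto simp: Sn_gen_def R_sphere_def Rring_iff)
qed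

theorem mainTheorem8:
  shows "Sigma3 = (\<Union>n. Sn n \<union> Sn' n)
    \<and> (\<Union>n. Sn n \<union> Sn' n) = {x :: real^3. x \<bullet> x = 1 \<and> (\<forall>i. x $ i \<in> Rring)}
    \<and> {x :: real^3. x \<bullet> x = 1 \<and> (\<forall>i. x $ i \<in> Rring)} = {y. embV y \<in> Sigma4}"
proof -
  have Sigma3: "Sigma3 = R_sphere"
    using Sigma3_subset_R_sphere unit_Ztau_dyadic_in_Sigma3
    by (auto simp: R_sphere_iff_Ztau_dyadic)
  have Sn: "(\<Union>n. Sn n \<union> Sn' n) = R_sphere"
    using Sn_gen_subset_R_sphere unit_Ztau_dyadic_in_Sn
    by (fastforce simp: R_sphere_iff_Ztau_dyadic Sn_def Sn'_def)
  have Sigma4: "{y. embV y \<in> Sigma4} = R_sphere"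
    using Sigma4_subset_R_sphere embV_in_R_sphere_iff embV_Sigma3_subset_Sigma4 Sigma3 by blast
  show ?thesis
    unfolding Sigma3 Sn Sigma4 by (simp add: R_sphere_def)
qed

end
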